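(* Let $r\ge 1$, $\mathbf{m}=(m_1,\ldots,m_r)\in\mathbb{N}^r$, $m=m_1+\cdots+m_r$, $\mathbf{f}=(f_1,\ldots,f_r)\in\mathbb{C}^r$ and $b,c\in\mathbb{C}$. Then for $0<t<1$ $$ G_{r+1,r+1}^{r+1,0}\!\left(t\,\middle|\,\begin{matrix}c,\mathbf{f}\\ b,\mathbf{f}+\mathbf{m}\end{matrix}\right) =\frac{t^b(1-t)^{c-b-1}}{\Gamma(c-b)}\sum_{k=0}^m D_k\,(c-b-k)_{k}\,\frac{t^k}{(t-1)^{k}}, $$ where $$ D_k=D_k(\mathbf{f},\mathbf{m},b)=\sum_{j=k}^m\alpha_j\,\mathbf{S}_{j}^{(k)} =\frac{(-1)^k(\mathbf{f}-b)_{\mathbf{m}}}{k!}\,{}_{r+1}F_{r}\!\left(\begin{matrix}-k,\,1-\mathbf{f}+b\\ 1-\mathbf{f}+b-\mathbf{m}\end{matrix}\right), $$ the numbers $\alpha_j$ being defined by the polynomial identity $(\mathbf{f}-b-t)_{\mathbf{m}}=\sum_{j=0}^{m}\alpha_j t^j$.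
   Context: $(a)_k=\Gamma(a+k)/\Gamma(a)$ is the rising factorial. For a vector $\mathbf{f}=(f_1,\ldots,f_r)$ and $\mathbf{m}=(m_1,\ldots,m_r)$: $(\mathbf{f})_{\mathbf{m}}=\prod_{i}(f_i)_{m_i}$, $(\mathbf{f})_n=\prod_i (f_i)_n$ for a scalar $n$, $\mathbf{f}+\alpha=(f_1+\alpha,\ldots,f_r+\alpha)$, $\mathbf{f}+\mathbf{m}$ is componentwise, and a vector appearing among the parameters of a hypergeometric or $G$ function means its components are listed. ${}_pF_q(\mathbf{a};\mathbf{b})$ without argument denotes ${}_pF_q(\mathbf{a};\mathbf{b};1)$ (here a terminating series). $\mathbf{S}_j^{(k)}$ are Stirling numbers of the second kind, defined by $n^j=\sum_{k=0}^j \mathbf{S}_j^{(k)}\,n(n-1)\cdots(n-k+1)$. $G^{r+1,0}_{r+1,r+1}$ is Meijer's $G$-function: $G^{r+1,0}_{r+1,r+1}(t\,|\,c,\mathbf{f};b,\mathbf{f}+\mathbf{m})=\frac{1}{2\pi i}\int_L \frac{\Gamma(b+s)\prod_i\Gamma(f_i+m_i+s)}{\Gamma(c+s)\prod_i\Gamma(f_i+s)}t^{-s}\,ds$, with $L$ a loop beginning and ending at $-\infty$ encircling all poles of the numerator Gamma functions once in the positive direction. *)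

theory Defs
  imports "HOL-Complex_Analysis.Complex_Analysis" "HOL-Combinatorics.Stirling"
    "HOL-Computational_Algebra.Polynomial"
begin

text \<open>Integrand of Meijer's G-function G^{r+1,0}_{r+1,r+1}(t | c, f; b, f+m):
  Gamma(b+s) prod_i Gamma(f_i+m_i+s) / (Gamma(c+s) prod_i Gamma(f_i+s)) t^(-s).
  Reciprocal Gamma factors are written with the entire function rGamma.\<close>
definition meijer_integrand ::
  "nat \<Rightarrow> complex \<Rightarrow> complex \<Rightarrow> (nat \<Rightarrow> complex) \<Rightarrow> (nat \<Rightarrow> nat) \<Rightarrow> real \<Rightarrow> complex \<Rightarrow> complex" where
  "meijer_integrand r b c f m t s =
     Gamma (b + s) * (\<Prod>i<r. Gamma (f i + of_nat (m i) + s))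
     * rGamma (c + s) * (\<Prod>i<r. rGamma (f i + s)) * (complex_of_real t) powr (- s)"

text \<open>Height and right abscissa of the loop: all poles of the numerator Gamma
  functions (at -b-n and -f_i-m_i-n) lie strictly inside.\<close>
definition meijer_H :: "nat \<Rightarrow> complex \<Rightarrow> (nat \<Rightarrow> complex) \<Rightarrow> real" where
  "meijer_H r b f = 1 + \<bar>Im b\<bar> + (\<Sum>i<r. \<bar>Im (f i)\<bar>)"

definition meijer_X :: "nat \<Rightarrow> complex \<Rightarrow> (nat \<Rightarrow> complex) \<Rightarrow> real" where
  "meijer_X r b f = 1 + \<bar>Re b\<bar> + (\<Sum>i<r. \<bar>Re (f i)\<bar>)"

text \<open>Letting R tend to infinity gives a loop beginning and ending
  at -infinity and encircling all poles once in the positive direction.\<close>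
definition meijer_loop :: "real \<Rightarrow> real \<Rightarrow> real \<Rightarrow> real \<Rightarrow> complex" where
  "meijer_loop X H R =
     linepath (Complex (-R) (-H)) (Complex X (-H))
     +++ linepath (Complex X (-H)) (Complex X H)
     +++ linepath (Complex X H) (Complex (-R) H)"

definition meijerG ::
  "nat \<Rightarrow> real \<Rightarrow> complex \<Rightarrow> (nat \<Rightarrow> complex) \<Rightarrow> complex \<Rightarrow> (nat \<Rightarrow> nat) \<Rightarrow> complex" where
  "meijerG r t c f b m =
     Lim at_top (\<lambda>R::real. contour_integral
        (meijer_loop (meijer_X r b f) (meijer_H r b f) R)
        (meijer_integrand r b c f m t) / (2 * of_real pi * \<i>))"

definition meijer_alpha :: "nat \<Rightarrow> (nat \<Rightarrow> complex) \<Rightarrow> (nat \<Rightarrow> nat) \<Rightarrow> complex \<Rightarrow> nat \<Rightarrow> complex" where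
  "meijer_alpha r f m b j =
     coeff (\<Prod>i<r. pochhammer [:f i - b, -1:] (m i)) j"

definition hyp_F :: "nat \<Rightarrow> (nat \<Rightarrow> complex) \<Rightarrow> (nat \<Rightarrow> nat) \<Rightarrow> complex \<Rightarrow> nat \<Rightarrow> complex" where
  "hyp_F r f m b k =
     (\<Sum>n\<le>k. pochhammer (- of_nat k) n * (\<Prod>i<r. pochhammer (1 - f i + b) n)
        / ((\<Prod>i<r. pochhammer (1 - f i + b - of_nat (m i)) n) * fact n))"

end

theory Submission
  imports Defs "HOL-Real_Asymp.Real_Asymp"
begin

(* The integrand is Gamma(b+s)/Gamma(c+s) times the polynomial P(s) = (f+s)_m times t^(-s), so
   inside the loop it only has the simple poles s = -b-n of Gamma(b+s), with residues
   (-1)^n/n! P(-b-n) t^(b+n) / Gamma(c-b-n).  Cutting the loop by vertical segments halfway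
   between consecutive poles, the residue theorem gives the partial residue sums, and the kernel
   is O(N^L t^N) on the N-th cut and on the remaining horizontal pieces; hence for 0 < t < 1 the
   loop integral is the whole residue series.  Writing P(-b-n) = sum_k D_k n(n-1)...(n-k+1) in
   falling factorials (which is where the Stirling numbers enter), each part of the series is a
   binomial series  sum_n (1+b-c)_n/n! n(n-1)...(n-k+1) t^n = (1+b-c)_k t^k (1-t)^(c-b-1-k).
   Finally k! D_k is the k-th finite difference at 0 of the polynomial (f-b-x)_m, and the
   reflection (x-n)_m (1-x-m)_n = (x)_m (1-x)_n turns it into the terminating hypergeometric sum. *)

section \<open>Falling factorials and finite differences\<close>

definition ffact :: "nat \<Rightarrow> 'a::comm_ring_1 \<Rightarrow> 'a" where
  "ffact k x = (\<Prod>i<k. x - of_nat i)"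

lemma ffact_0 [simp]: "ffact 0 x = 1"
  by (simp add: ffact_def)

lemma ffact_Suc: "ffact (Suc k) x = ffact k x * (x - of_nat k)"
  by (simp add: ffact_def)

lemma ffact_of_nat: "ffact k (of_nat n :: 'a::field_char_0) = fact k * of_nat (n choose k)"
  by (simp add: ffact_def binomial_gbinomial gbinomial_mult_fact atLeast0LessThan)

lemma power_eq_sum_Stirling_ffact:
  fixes x :: "'a::comm_ring_1"
  shows "x ^ j = (\<Sum>k\<le>j. of_nat (Stirling j k) * ffact k x)"
proof (induction j)
  case 0
  then show ?case by simp
next
  case (Suc j)
  define g where "g k = of_nat k * (of_nat (Stirling j k) * ffact k x)" for k
  have x_ffact: "x * ffact k x = ffact (Suc k) x + of_nat k * ffact k x" for k
    by (simp add: ffact_Suc algebra_simps)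
  have shift: "(\<Sum>k\<le>j. g k) = (\<Sum>k\<le>j. g (Suc k))"
  proof -
    have "(\<Sum>k\<le>Suc j. g k) = g 0 + (\<Sum>k\<le>j. g (Suc k))" by (rule sum.atMost_Suc_shift)
    moreover have "(\<Sum>k\<le>Suc j. g k) = (\<Sum>k\<le>j. g k)" by (simp add: g_def)
    ultimately show ?thesis by (simp add: g_def)
  qed
  have "x ^ Suc j = (\<Sum>k\<le>j. of_nat (Stirling j k) * (x * ffact k x))"
    by (simp add: Suc sum_distrib_left algebra_simps)
  also have "\<dots> = (\<Sum>k\<le>j. of_nat (Stirling j k) * ffact (Suc k) x) + (\<Sum>k\<le>j. g k)"
    by (simp add: x_ffact g_def algebra_simps sum.distrib)
  also have "\<dots> = (\<Sum>k\<le>j. of_nat (Stirling j k) * ffact (Suc k) x + g (Suc k))"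
    by (simp add: shift sum.distrib)
  also have "\<dots> = (\<Sum>k\<le>j. of_nat (Stirling (Suc j) (Suc k)) * ffact (Suc k) x)"
    by (intro sum.cong refl) (simp add: g_def algebra_simps)
  also have "\<dots> = (\<Sum>k\<le>Suc j. of_nat (Stirling (Suc j) k) * ffact k x)"
    by (subst sum.atMost_Suc_shift) simp
  finally show ?case .
qed

lemma sum_alternating_choose_mult_choose:
  assumes "i \<le> k"
  shows "(\<Sum>n\<le>k. (-1) ^ (k - n) * of_nat (k choose n) * of_nat (n choose i))
         = of_nat (k choose i) * (0::'a::comm_ring_1) ^ (k - i)"
proof -
  define g :: "nat \<Rightarrow> 'a" where
    "g n = (-1) ^ (k - n) * of_nat (k choose n) * of_nat (n choose i)" for n
  have "(\<Sum>n\<le>k. g n) = (\<Sum>n\<in>{i..k}. g n)"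
    by (rule sum.mono_neutral_right) (auto simp: g_def binomial_eq_0)
  also have "\<dots> = (\<Sum>p\<le>k - i. g (p + i))"
    using assms by (intro sum.reindex_bij_witness[of _ "\<lambda>p. p + i" "\<lambda>n. n - i"]) auto
  also have "\<dots> = (\<Sum>p\<le>k - i. of_nat (k choose i) * ((-1) ^ (k - i - p) * of_nat ((k - i) choose p)))"
  proof (intro sum.cong refl)
    fix p assume p: "p \<in> {..k - i}"
    have "(k choose (p + i)) * ((p + i) choose i) = (k choose i) * ((k - i) choose p)"
      using p assms choose_mult[of i "p + i" k] by auto
    then have "of_nat (k choose (p + i)) * of_nat ((p + i) choose i)
               = (of_nat (k choose i) * of_nat ((k - i) choose p) :: 'a)"
      by (metis of_nat_mult)
    moreover have "k - (p + i) = k - i - p" by simp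
    ultimately show "g (p + i) = of_nat (k choose i) * ((-1) ^ (k - i - p) * of_nat ((k - i) choose p))"
      unfolding g_def by (metis mult.assoc mult.left_commute)
  qed
  also have "\<dots> = of_nat (k choose i) * (\<Sum>p\<le>k - i. (-1) ^ (k - i - p) * of_nat ((k - i) choose p))"
    by (simp add: sum_distrib_left)
  also have "\<dots> = of_nat (k choose i) * (0::'a) ^ (k - i)"
    using binomial_ring[of "1::'a" "-1" "k - i"] by (simp add: mult_of_nat_commute)
  finally show ?thesis unfolding g_def .
qed

lemma sum_alternating_choose_mult_ffact:
  "(\<Sum>n\<le>k. (-1) ^ (k - n) * of_nat (k choose n) * ffact i (of_nat n))
     = (if i = k then fact k else (0::'a::field_char_0))"
proof (cases "i \<le> k")
  case True
  have "(\<Sum>n\<le>k. (-1) ^ (k - n) * of_nat (k choose n) * ffact i (of_nat n))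
      = fact i * (\<Sum>n\<le>k. (-1) ^ (k - n) * of_nat (k choose n) * (of_nat (n choose i) :: 'a))"
    by (simp add: ffact_of_nat sum_distrib_left algebra_simps)
  also have "\<dots> = fact i * (of_nat (k choose i) * 0 ^ (k - i))"
    using sum_alternating_choose_mult_choose[OF True] by simp
  finally show ?thesis
    using True by auto
next
  case False
  then show ?thesis by (auto intro!: sum.neutral simp: ffact_of_nat)
qed

lemma poly_pochhammer: "poly (pochhammer p k) x = pochhammer (poly p x) k"
  by (induction k) (simp_all add: pochhammer_Suc)

lemma degree_pochhammer_le:
  assumes "degree p \<le> 1"
  shows "degree (pochhammer p k) \<le> k"
proof (induction k)
  case (Suc k)
  have "degree (p + of_nat k) \<le> 1"
    using assms by (intro order.trans[OF degree_add_le]) auto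
  with Suc show ?case
    by (auto simp: pochhammer_Suc intro: order.trans[OF degree_mult_le])
qed simp

lemma poly_eq_sum_Stirling_ffact:
  fixes p :: "'a::comm_ring_1 poly"
  assumes "degree p \<le> M"
  shows "poly p x = (\<Sum>k\<le>M. (\<Sum>j=k..M. coeff p j * of_nat (Stirling j k)) * ffact k x)"
proof -
  have "poly p x = (\<Sum>j\<le>M. coeff p j * x ^ j)"
    unfolding poly_altdef
    using assms by (intro sum.mono_neutral_left) (auto simp: coeff_eq_0)
  also have "\<dots> = (\<Sum>j\<le>M. \<Sum>k\<le>M. coeff p j * (of_nat (Stirling j k) * ffact k x))"
  proof (intro sum.cong refl)
    fix j assume "j \<in> {..M}"
    then have "(\<Sum>k\<le>j. of_nat (Stirling j k) * ffact k x) = (\<Sum>k\<le>M. of_nat (Stirling j k) * ffact k x)"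
      by (intro sum.mono_neutral_left) auto
    then show "coeff p j * x ^ j = (\<Sum>k\<le>M. coeff p j * (of_nat (Stirling j k) * ffact k x))"
      by (simp add: power_eq_sum_Stirling_ffact[of x j] sum_distrib_left)
  qed
  also have "\<dots> = (\<Sum>k\<le>M. (\<Sum>j\<le>M. coeff p j * of_nat (Stirling j k)) * ffact k x)"
    by (subst sum.swap) (simp add: sum_distrib_right mult.assoc)
  also have "\<dots> = (\<Sum>k\<le>M. (\<Sum>j=k..M. coeff p j * of_nat (Stirling j k)) * ffact k x)"
    by (intro sum.cong refl arg_cong[where f = "\<lambda>z. z * _"] sum.mono_neutral_right) auto
  finally show ?thesis .
qed

lemma sum_alternating_choose_mult_poly:
  fixes p :: "'a::field_char_0 poly"
  assumes "degree p \<le> M"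
  shows "(\<Sum>n\<le>k. (-1) ^ (k - n) * of_nat (k choose n) * poly p (of_nat n))
         = fact k * (\<Sum>j=k..M. coeff p j * of_nat (Stirling j k))"
proof -
  define D where "D i = (\<Sum>j=i..M. coeff p j * of_nat (Stirling j i))" for i
  have "(\<Sum>n\<le>k. (-1) ^ (k - n) * of_nat (k choose n) * poly p (of_nat n))
      = (\<Sum>i\<le>M. D i * (\<Sum>n\<le>k. (-1) ^ (k - n) * of_nat (k choose n) * ffact i (of_nat n)))"
    unfolding poly_eq_sum_Stirling_ffact[OF assms] D_def[symmetric]
    by (simp add: sum_distrib_left sum_distrib_right sum.swap[of _ "{..k}"] mult_ac)
  also have "\<dots> = (\<Sum>i\<le>M. D i * (if i = k then fact k else 0))"
    by (simp add: sum_alternating_choose_mult_ffact)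
  also have "\<dots> = fact k * D k"
    by (cases "k \<le> M") (auto simp: D_def if_distrib cong: if_cong)
  finally show ?thesis by (simp add: D_def)
qed

section \<open>The coefficients D_k\<close>

lemma pochhammer_mult_reflect:
  fixes x :: "'a::comm_ring_1"
  shows "pochhammer (x - of_nat n) m * pochhammer (1 - x - of_nat m) n
       = pochhammer x m * pochhammer (1 - x) n"
proof -
  have "pochhammer (1 - x - of_nat m) n = (-1) ^ n * pochhammer (x + of_nat m - of_nat n) n"
    using pochhammer_minus'[of "of_nat n - x - of_nat m" n] by (simp add: algebra_simps)
  moreover have "pochhammer (1 - x) n = (-1) ^ n * pochhammer (x - of_nat n) n"
    using pochhammer_minus'[of "of_nat n - x" n] by (simp add: algebra_simps)
  moreover have "pochhammer (x - of_nat n) (m + n)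
      = pochhammer (x - of_nat n) m * pochhammer (x + of_nat m - of_nat n) n"
    by (subst pochhammer_product') (simp add: algebra_simps)
  moreover have "pochhammer (x - of_nat n) (n + m) = pochhammer (x - of_nat n) n * pochhammer x m"
    by (subst pochhammer_product') simp
  ultimately show ?thesis by (simp add: add.commute algebra_simps)
qed

lemma pochhammer_minus_of_nat:
  "pochhammer (- of_nat k) n = (-1) ^ n * fact n * (of_nat (k choose n) :: 'a::field_char_0)"
proof -
  have "fact n * (of_nat k gchoose n) = (-1) ^ n * (pochhammer (- of_nat k) n :: 'a)"
    using gbinomial_pochhammer[of "of_nat k :: 'a" n] by (simp add: field_simps)
  then have "(-1) ^ n * fact n * (of_nat k gchoose n) = ((-1::'a) ^ n * (-1) ^ n) * pochhammer (- of_nat k) n"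
    by (simp add: mult.assoc)
  then show ?thesis by (simp add: binomial_gbinomial flip: power_mult_distrib)
qed

definition meijer_alpha_poly :: "nat \<Rightarrow> (nat \<Rightarrow> complex) \<Rightarrow> (nat \<Rightarrow> nat) \<Rightarrow> complex \<Rightarrow> complex poly" where
  "meijer_alpha_poly r f m b = (\<Prod>i<r. pochhammer [:f i - b, -1:] (m i))"

lemma meijer_alpha_eq_coeff: "meijer_alpha r f m b j = coeff (meijer_alpha_poly r f m b) j"
  by (simp add: meijer_alpha_def meijer_alpha_poly_def)

lemma poly_meijer_alpha_poly:
  "poly (meijer_alpha_poly r f m b) x = (\<Prod>i<r. pochhammer (f i - b - x) (m i))"
  by (simp add: meijer_alpha_poly_def poly_prod poly_pochhammer)

lemma degree_meijer_alpha_poly: "degree (meijer_alpha_poly r f m b) \<le> (\<Sum>i<r. m i)"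
proof -
  have "degree (meijer_alpha_poly r f m b) \<le> (\<Sum>i<r. degree (pochhammer [:f i - b, -1:] (m i)))"
    unfolding meijer_alpha_poly_def
    using degree_prod_sum_le[of "{..<r}" "\<lambda>i. pochhammer [:f i - b, -1:] (m i)"] by (simp add: o_def)
  also have "\<dots> \<le> (\<Sum>i<r. m i)"
    by (intro sum_mono degree_pochhammer_le) auto
  finally show ?thesis .
qed

lemma sum_Stirling_meijer_alpha_eq_hyp_F:
  assumes "\<forall>n\<le>k. \<forall>i<r. pochhammer (1 - f i + b - of_nat (m i)) n \<noteq> 0"
  shows "(\<Sum>j=k..(\<Sum>i<r. m i). meijer_alpha r f m b j * of_nat (Stirling j k))
       = (-1) ^ k * (\<Prod>i<r. pochhammer (f i - b) (m i)) / fact k * hyp_F r f m b k"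
proof -
  define A where "A = (\<Prod>i<r. pochhammer (f i - b) (m i))"
  define U where "U n = (\<Prod>i<r. pochhammer (1 - f i + b) n)" for n
  define W where "W n = (\<Prod>i<r. pochhammer (1 - f i + b - of_nat (m i)) n)" for n
  have W_nonzero: "W n \<noteq> 0" if "n \<le> k" for n
    using assms that unfolding W_def by (auto simp: prod_zero_iff)
  have poly_at_nat: "poly (meijer_alpha_poly r f m b) (of_nat n) = A * U n / W n" if "n \<le> k" for n
  proof -
    have "poly (meijer_alpha_poly r f m b) (of_nat n) * W n
        = (\<Prod>i<r. pochhammer (f i - b - of_nat n) (m i) * pochhammer (1 - (f i - b) - of_nat (m i)) n)"
      unfolding poly_meijer_alpha_poly W_def by (simp add: prod.distrib algebra_simps)
    also have "\<dots> = (\<Prod>i<r. pochhammer (f i - b) (m i) * pochhammer (1 - (f i - b)) n)"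
      by (intro prod.cong refl pochhammer_mult_reflect)
    also have "\<dots> = A * U n"
      unfolding A_def U_def by (simp add: prod.distrib algebra_simps)
    finally show ?thesis using W_nonzero[OF that] by (simp add: field_simps)
  qed
  have sign: "(-1::complex) ^ (k - n) = (-1) ^ k * (-1) ^ n" if "n \<le> k" for n
    using that by (metis neg_one_power_add_eq_neg_one_power_diff power_add)
  have "fact k * (\<Sum>j=k..(\<Sum>i<r. m i). meijer_alpha r f m b j * of_nat (Stirling j k))
      = (\<Sum>n\<le>k. (-1) ^ (k - n) * of_nat (k choose n) * poly (meijer_alpha_poly r f m b) (of_nat n))"
    unfolding meijer_alpha_eq_coeff by (rule sum_alternating_choose_mult_poly[symmetric, OF degree_meijer_alpha_poly])
  also have "\<dots> = (\<Sum>n\<le>k. (-1) ^ (k - n) * of_nat (k choose n) * (A * U n / W n))"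
    by (intro sum.cong refl) (simp add: poly_at_nat)
  also have "\<dots> = (-1) ^ k * A * (\<Sum>n\<le>k. (-1) ^ n * of_nat (k choose n) * U n / W n)"
    unfolding sum_distrib_left by (intro sum.cong refl) (simp add: sign mult_ac)
  also have "\<dots> = (-1) ^ k * A * hyp_F r f m b k"
    unfolding hyp_F_def U_def W_def
    by (intro arg_cong[where f = "\<lambda>z. _ * z"] sum.cong refl) (simp add: pochhammer_minus_of_nat field_simps)
  finally show ?thesis by (simp add: A_def field_simps)
qed

section \<open>Pochhammer symbols, the Gamma function and binomial series\<close>

lemma norm_pochhammer_le: "norm (pochhammer (z::'a::real_normed_field) k) \<le> (norm z + real k) ^ k"
proof -
  have "norm (pochhammer z k) \<le> (\<Prod>j\<in>{0..<k}. norm (z + of_nat j))"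
    unfolding pochhammer_prod by (rule norm_prod_le)
  also have "\<dots> \<le> (\<Prod>j\<in>{0..<k}. norm z + real k)"
    by (intro prod_mono conjI norm_ge_zero order.trans[OF norm_triangle_ineq]) auto
  finally show ?thesis by simp
qed

lemma add_mult_power_le_mult_Suc_power:
  fixes a :: real
  assumes "real N + 1 \<le> a"
  shows "(a + real L) * (real N + 1) ^ L \<le> a * (real N + 2) ^ L"
proof -
  have pos: "real N + 1 > 0" by simp
  have "1 + real L * (1 / (real N + 1)) \<le> (1 + 1 / (real N + 1)) ^ L"
    by (rule Bernoulli_inequality) (simp add: order.trans[of _ 0])
  also have "1 + 1 / (real N + 1) = (real N + 2) / (real N + 1)"
    using pos by (simp add: field_simps)
  finally have "1 + real L / (real N + 1) \<le> (real N + 2) ^ L / (real N + 1) ^ L"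
    by (simp add: power_divide)
  moreover have "real L / a \<le> real L / (real N + 1)"
    using assms pos by (intro divide_left_mono) auto
  ultimately have "(1 + real L / a) * (a * (real N + 1) ^ L)
      \<le> (real N + 2) ^ L / (real N + 1) ^ L * (a * (real N + 1) ^ L)"
    using assms pos by (intro mult_right_mono) auto
  moreover have "(1 + real L / a) * (a * (real N + 1) ^ L) = (a + real L) * (real N + 1) ^ L"
    using assms pos by (simp add: field_simps)
  moreover have "(real N + 2) ^ L / (real N + 1) ^ L * (a * (real N + 1) ^ L) = a * (real N + 2) ^ L"
    using pos by simp
  ultimately show ?thesis by linarith
qed

text \<open>For Re z \<le> 0 the factors of (z - N)_N have modulus at least 1, ..., N, so shifting z by a bounded
  d changes the Pochhammer symbol only by a polynomial factor in N.\<close>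

lemma norm_pochhammer_shift_le:
  fixes z d :: complex
  assumes z: "Re z \<le> 0" and d: "norm d \<le> real L"
  shows "norm (pochhammer (z + d - of_nat N) N) \<le> norm (pochhammer (z - of_nat N) N) * (real N + 1) ^ L"
proof (induction N)
  case 0
  then show ?case by simp
next
  case (Suc N)
  define a where "a = norm (z - of_nat (Suc N))"
  define Q where "Q = norm (pochhammer (z - of_nat N) N)"
  have a_ge: "real N + 1 \<le> a"
    using abs_Re_le_cmod[of "z - of_nat (Suc N)"] z unfolding a_def by auto
  have "norm (z + d - of_nat (Suc N)) \<le> a + norm d"
    unfolding a_def using norm_triangle_ineq[of "z - of_nat (Suc N)" d] by (simp add: algebra_simps)
  with d have factor: "norm (z + d - of_nat (Suc N)) \<le> a + real L"
    by linarith
  have rec_z: "pochhammer (z - of_nat (Suc N)) (Suc N) = (z - of_nat (Suc N)) * pochhammer (z - of_nat N) N"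
    by (simp add: pochhammer_rec algebra_simps)
  have "pochhammer (z + d - of_nat (Suc N)) (Suc N) = (z + d - of_nat (Suc N)) * pochhammer (z + d - of_nat N) N"
    by (simp add: pochhammer_rec algebra_simps)
  then have "norm (pochhammer (z + d - of_nat (Suc N)) (Suc N))
      = norm (z + d - of_nat (Suc N)) * norm (pochhammer (z + d - of_nat N) N)"
    by (simp add: norm_mult)
  also have "\<dots> \<le> (a + real L) * (Q * (real N + 1) ^ L)"
    unfolding Q_def using factor Suc.IH a_ge by (intro mult_mono) auto
  also have "\<dots> = ((a + real L) * (real N + 1) ^ L) * Q"
    by (simp add: algebra_simps)
  also have "\<dots> \<le> (a * (real N + 2) ^ L) * Q"
    using add_mult_power_le_mult_Suc_power[OF a_ge] by (intro mult_right_mono) (auto simp: Q_def)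
  also have "\<dots> = norm (pochhammer (z - of_nat (Suc N)) (Suc N)) * (real (Suc N) + 1) ^ L"
    unfolding rec_z norm_mult a_def Q_def by (simp add: algebra_simps)
  finally show ?case .
qed

lemma norm_pochhammer_ratio_le:
  fixes z d :: complex
  assumes "Re z \<le> 0" and "norm d \<le> real L"
  shows "norm (pochhammer (z + d - of_nat N) N / pochhammer (z - of_nat N) N) \<le> (real N + 1) ^ L"
  using norm_pochhammer_shift_le[OF assms, of N]
  by (cases "pochhammer (z - of_nat N) N = 0") (simp_all add: norm_divide divide_le_eq mult.commute)

lemma Gamma_minus_of_nat: "Gamma (z - of_nat N) = Gamma z / pochhammer (z - of_nat N) N"
  using pochhammer_rGamma[of "z - of_nat N" N] by (simp add: Gamma_def divide_inverse mult.commute)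

lemma pochhammer_series_sums:
  fixes z a :: complex
  assumes "norm z < 1"
  shows "(\<lambda>i. pochhammer a i / fact i * z ^ i) sums (1 - z) powr (- a)"
proof -
  have "(\<lambda>i. ((- a) gchoose i) * (- z) ^ i) sums (1 + (- z)) powr (- a)"
    using assms by (intro gen_binomial_complex) simp
  moreover have "((- a) gchoose i) * (- z) ^ i = pochhammer a i / fact i * z ^ i" for i
  proof -
    have "((- a) gchoose i) * (- z) ^ i = ((-1) ^ i * (-1) ^ i) * (pochhammer a i / fact i * z ^ i)"
      by (simp add: gbinomial_pochhammer power_minus[of z] algebra_simps)
    then show ?thesis by (simp flip: power_mult_distrib)
  qed
  ultimately show ?thesis by simp
qed

lemma pochhammer_ffact_series_sums:
  fixes z a :: complex
  assumes "norm z < 1"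
  shows "(\<lambda>n. pochhammer a n / fact n * ffact k (of_nat n) * z ^ n)
           sums (pochhammer a k * z ^ k * (1 - z) powr (- (a + of_nat k)))"
proof -
  define u where "u n = pochhammer a n / fact n * ffact k (of_nat n) * z ^ n" for n
  have shifted: "u (i + k) = pochhammer a k * z ^ k * (pochhammer (a + of_nat k) i / fact i * z ^ i)" for i
  proof -
    have "fact k * fact i * of_nat ((i + k) choose k) = (fact (i + k) :: complex)"
      using binomial_fact_lemma[of k "i + k"] by (metis add_diff_cancel_right' le_add2 of_nat_fact of_nat_mult)
    moreover have "pochhammer a (i + k) = pochhammer a k * pochhammer (a + of_nat k) i"
      by (metis add.commute pochhammer_product')
    moreover have "(fact i :: complex) \<noteq> 0" "(fact (i + k) :: complex) \<noteq> 0"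
      by simp_all
    ultimately show ?thesis
      unfolding u_def ffact_of_nat by (simp add: divide_simps power_add) (simp add: algebra_simps)
  qed
  have "(\<lambda>i. pochhammer a k * z ^ k * (pochhammer (a + of_nat k) i / fact i * z ^ i))
          sums (pochhammer a k * z ^ k * (1 - z) powr (- (a + of_nat k)))"
    by (intro sums_mult pochhammer_series_sums assms)
  then have "(\<lambda>i. u (i + k)) sums (pochhammer a k * z ^ k * (1 - z) powr (- (a + of_nat k)))"
    by (simp only: shifted)
  moreover have "u n = 0" if "n < k" for n
    using that by (simp add: u_def ffact_of_nat binomial_eq_0)
  ultimately show ?thesis
    using sums_zero_iff_shift[of k u] by (simp add: u_def)
qed

lemma notin_nonpos_Ints_if: "Im z \<noteq> 0 \<or> 0 < Re z \<Longrightarrow> (z::complex) \<notin> \<int>\<^sub>\<le>\<^sub>0"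
  using nonpos_Ints_subset_nonpos_Reals complex_nonpos_Reals_iff by fastforce

lemma add_in_nonpos_Ints_iff: "(a::'a::ring_1) + s \<in> \<int>\<^sub>\<le>\<^sub>0 \<longleftrightarrow> (\<exists>k. s = - a - of_nat k)"
proof
  assume "a + s \<in> \<int>\<^sub>\<le>\<^sub>0"
  then obtain k where "a + s = - of_nat k" by (elim nonpos_Ints_cases')
  then have "s = - a - of_nat k" by (simp add: algebra_simps flip: add_diff_eq eq_diff_eq)
  then show "\<exists>k. s = - a - of_nat k" ..
qed auto

lemma pochhammer_mult_powr_eq:
  fixes a :: complex and t :: real
  assumes "t < 1"
  shows "pochhammer a k * of_real t ^ k * (1 - of_real t) powr (- (a + of_nat k))
       = of_real (1 - t) powr (- a) * pochhammer (1 - a - of_nat k) k * of_real t ^ k / of_real (t - 1) ^ k"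
proof -
  have nonzero: "complex_of_real (1 - t) \<noteq> 0"
    using assms by simp
  have "(1 - of_real t) powr (- (a + of_nat k)) = complex_of_real (1 - t) powr (- a - of_nat k)"
    by (simp add: algebra_simps)
  also have "\<dots> = of_real (1 - t) powr (- a) / of_real (1 - t) ^ k"
    using nonzero by (simp add: powr_diff powr_nat')
  finally have "(1 - of_real t) powr (- (a + of_nat k)) = of_real (1 - t) powr (- a) / of_real (1 - t) ^ k" .
  moreover have "pochhammer (1 - a - of_nat k) k = (-1) ^ k * pochhammer a k"
    using pochhammer_minus'[of "- a" k] by (simp add: algebra_simps)
  moreover have "complex_of_real (t - 1) ^ k = (-1) ^ k * of_real (1 - t) ^ k"
    by (simp flip: power_minus)
  ultimately show ?thesis
    by (simp add: field_simps)
qed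

section \<open>The kernel and its residues\<close>

locale meijer_setting =
  fixes r :: nat and m :: "nat \<Rightarrow> nat" and f :: "nat \<Rightarrow> complex" and b c :: complex and t :: real
  assumes t_pos: "0 < t" and t_less_1: "t < 1"
begin

abbreviation X :: real where "X \<equiv> meijer_X r b f"
abbreviation H :: real where "H \<equiv> meijer_H r b f"

lemma abs_Im_less_H: "\<bar>Im b\<bar> < H" "i < r \<Longrightarrow> \<bar>Im (f i)\<bar> < H"
proof -
  have "0 \<le> (\<Sum>i<r. \<bar>Im (f i)\<bar>)"
    by (intro sum_nonneg) auto
  then show "\<bar>Im b\<bar> < H"
    unfolding meijer_H_def by linarith
  assume "i < r"
  then have "\<bar>Im (f i)\<bar> \<le> (\<Sum>i<r. \<bar>Im (f i)\<bar>)"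
    by (intro member_le_sum) auto
  then show "\<bar>Im (f i)\<bar> < H"
    unfolding meijer_H_def by linarith
qed

lemma abs_Re_less_X: "\<bar>Re b\<bar> < X" "i < r \<Longrightarrow> \<bar>Re (f i)\<bar> < X"
proof -
  have "0 \<le> (\<Sum>i<r. \<bar>Re (f i)\<bar>)"
    by (intro sum_nonneg) auto
  then show "\<bar>Re b\<bar> < X"
    unfolding meijer_X_def by linarith
  assume "i < r"
  then have "\<bar>Re (f i)\<bar> \<le> (\<Sum>i<r. \<bar>Re (f i)\<bar>)"
    by (intro member_le_sum) auto
  then show "\<bar>Re (f i)\<bar> < X"
    unfolding meijer_X_def by linarith
qed

lemma H_pos: "0 < H"
  using abs_Im_less_H(1) by linarith

lemma abs_H [simp]: "\<bar>H\<bar> = H" "\<bar>- H\<bar> = H"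
  using H_pos by simp_all

lemma notin_nonpos_Ints_on_loop_lines:
  assumes "\<bar>Im w\<bar> < H" "\<bar>Re w\<bar> < X" and "\<bar>Im s\<bar> = H \<or> Re s = X"
  shows "w + of_nat k + s \<notin> \<int>\<^sub>\<le>\<^sub>0"
  by (rule notin_nonpos_Ints_if) (use assms in auto)

lemma meijer_loop_lines:
  "s \<in> path_image (meijer_loop X H R) \<Longrightarrow> \<bar>Im s\<bar> = H \<or> Re s = X"
  using H_pos unfolding meijer_loop_def
  by (auto simp: path_image_join closed_segment_same_Im closed_segment_same_Re)

definition poch_prod :: "complex \<Rightarrow> complex" where
  "poch_prod s = (\<Prod>i<r. pochhammer (f i + s) (m i))"

definition kernel :: "complex \<Rightarrow> complex" where
  "kernel s = Gamma (b + s) * rGamma (c + s) * poch_prod s * exp (- s * of_real (ln t))"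

definition kernel_residue :: "nat \<Rightarrow> complex" where
  "kernel_residue n = (-1) ^ n / fact n * rGamma (c - b - of_nat n) * poch_prod (- b - of_nat n)
                      * exp ((b + of_nat n) * of_real (ln t))"

definition msum :: nat where
  "msum = (\<Sum>i<r. m i)"

lemma norm_poch_prod_le: "norm (poch_prod s) \<le> ((\<Sum>i<r. norm (f i)) + norm s + real msum) ^ msum"
proof -
  define A where "A = (\<Sum>i<r. norm (f i)) + norm s + real msum"
  have "norm (pochhammer (f i + s) (m i)) \<le> A ^ m i" if "i < r" for i
  proof -
    have "norm (f i) \<le> (\<Sum>i<r. norm (f i))" "m i \<le> msum"
      using that unfolding msum_def by (auto intro: member_le_sum)
    then have "norm (f i + s) + real (m i) \<le> A"
      using norm_triangle_ineq[of "f i" s] unfolding A_def by linarith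
    then show ?thesis
      using norm_pochhammer_le[of "f i + s" "m i"]
      by (meson order.trans power_mono norm_ge_zero add_nonneg_nonneg of_nat_0_le_iff)
  qed
  then have "norm (poch_prod s) \<le> (\<Prod>i<r. A ^ m i)"
    unfolding poch_prod_def by (intro order.trans[OF norm_prod_le] prod_mono) auto
  also have "\<dots> = A ^ msum"
    unfolding msum_def by (simp add: power_sum)
  finally show ?thesis by (simp add: A_def)
qed

lemma poch_prod_holomorphic: "poch_prod holomorphic_on A"
  unfolding poch_prod_def pochhammer_prod by (intro holomorphic_intros)

lemma kernel_holomorphic:
  assumes "\<And>s. s \<in> A \<Longrightarrow> b + s \<notin> \<int>\<^sub>\<le>\<^sub>0"
  shows "kernel holomorphic_on A"
proof -
  have "(\<lambda>s. Gamma (b + s) * rGamma (c + s) * poch_prod s * exp (- s * of_real (ln t))) holomorphic_on A"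
    using poch_prod_holomorphic[of A] assms
    by (intro holomorphic_intros) (auto simp: holomorphic_on_def)
  then show ?thesis unfolding kernel_def[abs_def] .
qed

lemma kernel_continuous_on_segment:
  "(\<And>s. s \<in> closed_segment p q \<Longrightarrow> b + s \<notin> \<int>\<^sub>\<le>\<^sub>0) \<Longrightarrow> continuous_on (closed_segment p q) kernel"
  by (intro holomorphic_on_imp_continuous_on kernel_holomorphic)

lemma kernel_integrable_on_linepath:
  "(\<And>s. s \<in> closed_segment p q \<Longrightarrow> b + s \<notin> \<int>\<^sub>\<le>\<^sub>0) \<Longrightarrow> kernel contour_integrable_on linepath p q"
  by (intro contour_integrable_continuous_linepath kernel_continuous_on_segment)

lemma b_plus_notin_nonpos_Ints_on_loop_lines: "\<bar>Im s\<bar> = H \<or> Re s = X \<Longrightarrow> b + s \<notin> \<int>\<^sub>\<le>\<^sub>0"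
  using notin_nonpos_Ints_on_loop_lines[OF abs_Im_less_H(1) abs_Re_less_X(1), of s 0] by simp

lemma kernel_continuous_on_horizontal:
  "\<bar>y\<bar> = H \<Longrightarrow> continuous_on (closed_segment (Complex p y) (Complex q y)) kernel"
  by (intro kernel_continuous_on_segment b_plus_notin_nonpos_Ints_on_loop_lines)
     (auto simp: closed_segment_same_Im)

lemma kernel_integrable_on_horizontal:
  "\<bar>y\<bar> = H \<Longrightarrow> kernel contour_integrable_on linepath (Complex p y) (Complex q y)"
  by (intro contour_integrable_continuous_linepath kernel_continuous_on_horizontal)

lemma kernel_integrable_on_vertical_X:
  "kernel contour_integrable_on linepath (Complex X p) (Complex X q)"
  by (intro kernel_integrable_on_linepath b_plus_notin_nonpos_Ints_on_loop_lines)
     (auto simp: closed_segment_same_Re)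

lemma meijer_integrand_eq_kernel:
  assumes "\<forall>i<r. f i + of_nat (m i) + s \<notin> \<int>\<^sub>\<le>\<^sub>0"
  shows "meijer_integrand r b c f m t s = kernel s"
proof -
  have "Gamma (f i + of_nat (m i) + s) * rGamma (f i + s) = pochhammer (f i + s) (m i)" if "i < r" for i
  proof -
    have "rGamma (f i + s + of_nat (m i)) \<noteq> 0"
      using assms that by (simp add: rGamma_eq_zero_iff add_ac)
    then show ?thesis
      using pochhammer_rGamma[of "f i + s" "m i"] by (simp add: Gamma_def add_ac field_simps)
  qed
  then have "(\<Prod>i<r. Gamma (f i + of_nat (m i) + s) * rGamma (f i + s)) = poch_prod s"
    unfolding poch_prod_def by (intro prod.cong) auto
  moreover have "(complex_of_real t) powr (- s) = exp (- s * of_real (ln t))"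
    using t_pos by (simp add: powr_def Ln_of_real)
  ultimately show ?thesis
    unfolding meijer_integrand_def kernel_def by (simp add: prod.distrib algebra_simps)
qed

lemma contour_integral_meijer_loop_eq_kernel:
  "contour_integral (meijer_loop X H R) (meijer_integrand r b c f m t)
     = contour_integral (meijer_loop X H R) kernel"
proof (intro contour_integral_eq meijer_integrand_eq_kernel allI impI)
  fix s i assume "s \<in> path_image (meijer_loop X H R)" "i < r"
  then show "f i + of_nat (m i) + s \<notin> \<int>\<^sub>\<le>\<^sub>0"
    by (intro notin_nonpos_Ints_on_loop_lines abs_Im_less_H abs_Re_less_X meijer_loop_lines)
qed

lemma b_plus_notin_nonpos_Ints_near_pole:
  assumes "s \<in> ball (- b - of_nat n) 1" "s \<noteq> - b - of_nat n"
  shows "b + s \<notin> \<int>\<^sub>\<le>\<^sub>0"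
proof
  assume "b + s \<in> \<int>\<^sub>\<le>\<^sub>0"
  then obtain k where k: "s = - b - of_nat k" by (auto simp: add_in_nonpos_Ints_iff)
  then have "s - (- b - of_nat n) = of_int (int n - int k)"
    by simp
  moreover have "norm (s - (- b - of_nat n)) < 1"
    using assms(1) by (simp add: dist_norm norm_minus_commute)
  ultimately have "\<bar>real_of_int (int n - int k)\<bar> < 1"
    by (metis norm_of_int)
  then have "n = k" by linarith
  with assms(2) k show False by simp
qed

lemma residue_kernel: "residue kernel (- b - of_nat n) = kernel_residue n"
proof (rule residue_simple')
  define p where "p = - b - of_nat n"
  show "kernel holomorphic_on ball p 1 - {p}"
    using b_plus_notin_nonpos_Ints_near_pole unfolding p_def by (intro kernel_holomorphic) auto
  define g where "g w = rGamma (c + w) * poch_prod w * exp (- w * of_real (ln t))" for w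
  have "g holomorphic_on UNIV"
    unfolding g_def poch_prod_def pochhammer_prod by (intro holomorphic_intros)
  then have "(g \<longlongrightarrow> g p) (at p)"
    by (meson UNIV_I holomorphic_on_imp_continuous_on continuous_on_eq_continuous_at isCont_def open_UNIV)
  moreover have "((\<lambda>w. Gamma (w + b) * (w + b + of_nat n)) \<longlongrightarrow> (-1) ^ n / fact n) (at p)"
  proof -
    have "p = - of_nat n - b" by (simp add: p_def)
    then show ?thesis using LIM_offset[OF Gamma_residues[of n], of b] by (simp add: add_ac)
  qed
  ultimately have "((\<lambda>w. Gamma (w + b) * (w + b + of_nat n) * g w) \<longlongrightarrow> (-1) ^ n / fact n * g p) (at p)"
    by (intro tendsto_mult)
  moreover have "(\<lambda>w. kernel w * (w - p)) = (\<lambda>w. Gamma (w + b) * (w + b + of_nat n) * g w)"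
    by (auto simp: kernel_def g_def p_def fun_eq_iff algebra_simps)
  moreover have "(-1) ^ n / fact n * g p = kernel_residue n"
    by (simp add: g_def p_def kernel_residue_def algebra_simps)
  ultimately show "((\<lambda>w. kernel w * (w - p)) \<longlongrightarrow> kernel_residue n) (at p)"
    by simp
qed simp_all

text \<open>The vertical line Re s = - cut_abscissa N passes halfway between the poles - b - N and - b - N - 1.\<close>

definition cut_abscissa :: "nat \<Rightarrow> real" where
  "cut_abscissa N = Re b + real N + 1/2"

lemma contour_integral_rectpath_kernel:
  "contour_integral (rectpath (Complex (- cut_abscissa N) (- H)) (Complex X H)) kernel
     = 2 * pi * \<i> * (\<Sum>n\<le>N. kernel_residue n)"
proof -
  define a1 where "a1 = Complex (- cut_abscissa N) (- H)"
  define a3 where "a3 = Complex X H"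
  define poles where "poles = (\<lambda>n. - b - of_nat n) ` {..N}"
  define S where "S = box (Complex (- cut_abscissa N - 1/2) (- H - 1)) (Complex (X + 1) (H + 1))"
  have le: "Re a1 \<le> Re a3" "Im a1 \<le> Im a3"
    using abs_Re_less_X(1) H_pos by (auto simp: a1_def a3_def cut_abscissa_def)
  have poles_inside: "poles \<subseteq> box a1 a3"
    using abs_Re_less_X(1) abs_Im_less_H(1) by (auto simp: poles_def a1_def a3_def in_box_complex_iff cut_abscissa_def)
  have "cbox a1 a3 \<subseteq> S"
    by (auto simp: S_def a1_def a3_def in_box_complex_iff in_cbox_complex_iff)
  have "kernel holomorphic_on S - poles"
  proof (rule kernel_holomorphic)
    fix s assume s: "s \<in> S - poles"
    show "b + s \<notin> \<int>\<^sub>\<le>\<^sub>0"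
    proof
      assume "b + s \<in> \<int>\<^sub>\<le>\<^sub>0"
      then obtain k where k: "s = - b - of_nat k" by (auto simp: add_in_nonpos_Ints_iff)
      with s have "real k < real N + 1"
        by (auto simp: S_def in_box_complex_iff cut_abscissa_def)
      with s k show False by (auto simp: poles_def)
    qed
  qed
  then have "contour_integral (rectpath a1 a3) kernel
      = 2 * pi * \<i> * (\<Sum>p\<in>poles. winding_number (rectpath a1 a3) p * residue kernel p)"
    using path_image_rectpath_cbox_minus_box[OF le] winding_number_rectpath_outside[OF le]
      \<open>cbox a1 a3 \<subseteq> S\<close> poles_inside
    by (intro Residue_theorem) (auto simp: S_def open_box convex_connected poles_def)
  also have "\<dots> = 2 * pi * \<i> * (\<Sum>p\<in>poles. residue kernel p)"
    using poles_inside by (intro arg_cong[where f = "\<lambda>z. _ * z"] sum.cong refl) (auto simp: winding_number_rectpath)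
  also have "(\<Sum>p\<in>poles. residue kernel p) = (\<Sum>n\<le>N. kernel_residue n)"
    unfolding poles_def by (subst sum.reindex) (auto simp: inj_on_def residue_kernel)
  finally show ?thesis by (simp add: a1_def a3_def)
qed

text \<open>The points of the N-th cut, and of the horizontal pieces of the loop between the N-th and the
  (N+1)-th cut, lie in the translate by - N of this fixed compact set.\<close>

definition tail_base :: "complex set" where
  "tail_base = {s. Re s = - Re b - 1/2 \<and> \<bar>Im s\<bar> \<le> H}
             \<union> {s. - Re b - 3/2 \<le> Re s \<and> Re s \<le> - Re b - 1/2 \<and> \<bar>Im s\<bar> = H}"

lemma compact_tail_base: "compact tail_base"
proof -
  have "closed tail_base"
    unfolding tail_base_def
    by (intro closed_Un closed_Collect_conj closed_Collect_eq closed_Collect_le continuous_intros)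
  moreover have "tail_base \<subseteq> cball 0 (\<bar>Re b\<bar> + 2 + H)"
  proof
    fix s assume "s \<in> tail_base"
    then have "\<bar>Re s\<bar> \<le> \<bar>Re b\<bar> + 2" "\<bar>Im s\<bar> \<le> H"
      unfolding tail_base_def by auto
    then show "s \<in> cball 0 (\<bar>Re b\<bar> + 2 + H)"
      using cmod_le[of s] by auto
  qed
  then have "bounded tail_base"
    using bounded_cball bounded_subset by blast
  ultimately show ?thesis by (simp add: compact_eq_bounded_closed)
qed

lemma tail_base_Re_le: "s \<in> tail_base \<Longrightarrow> Re (b + s) \<le> 0"
  unfolding tail_base_def by auto

lemma b_plus_tail_base_notin_Ints:
  assumes "s \<in> tail_base"
  shows "b + s \<notin> \<int>"
proof
  assume "b + s \<in> \<int>"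
  then obtain i where i: "Im (b + s) = 0" "Re (b + s) = of_int i"
    by (auto simp: complex_is_Int_iff)
  with assms abs_Im_less_H(1) have "real_of_int i = - 1/2"
    by (auto simp: tail_base_def)
  then have "real_of_int (2 * i) = - 1" by simp
  then have "2 * i = - 1" by linarith
  then show False by presburger
qed

lemma b_plus_notin_nonpos_Ints_if_shift_in_tail_base:
  "s + of_nat N \<in> tail_base \<Longrightarrow> b + s \<notin> \<int>\<^sub>\<le>\<^sub>0"
  using b_plus_tail_base_notin_Ints[of "s + of_nat N"] Ints_add[OF _ Ints_of_nat, of "b + s" N]
  by (auto simp: add_ac)

lemma kernel_minus_of_nat:
  "kernel (s - of_nat N)
     = Gamma (b + s) * rGamma (c + s) * exp (- s * of_real (ln t))
       * (pochhammer (c + s - of_nat N) N / pochhammer (b + s - of_nat N) N)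
       * poch_prod (s - of_nat N) * of_real (t ^ N)"
proof -
  have "exp (- (s - of_nat N) * of_real (ln t)) = exp (- s * of_real (ln t)) * exp (of_nat N * of_real (ln t))"
    by (simp add: algebra_simps flip: exp_add)
  also have "exp (of_nat N * of_real (ln t) :: complex) = exp (of_real (ln t)) ^ N"
    by (rule exp_of_nat_mult)
  also have "exp (of_real (ln t) :: complex) = of_real t"
    using t_pos by (simp add: exp_of_real)
  finally have "exp (- (s - of_nat N) * of_real (ln t)) = exp (- s * of_real (ln t)) * of_real (t ^ N)"
    by simp
  moreover have "Gamma (b + (s - of_nat N)) = Gamma (b + s) / pochhammer (b + s - of_nat N) N"
    using Gamma_minus_of_nat[of "b + s" N] by (simp add: algebra_simps)
  moreover have "rGamma (c + (s - of_nat N)) = pochhammer (c + s - of_nat N) N * rGamma (c + s)"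
    using pochhammer_rGamma[of "c + s - of_nat N" N] by (simp add: algebra_simps)
  ultimately show ?thesis
    unfolding kernel_def by (simp add: field_simps)
qed

lemma Gamma_factor_bounded_on_tail_base:
  obtains C where "C > 0"
    "\<And>s. s \<in> tail_base \<Longrightarrow> norm (Gamma (b + s) * rGamma (c + s) * exp (- s * of_real (ln t))) \<le> C"
proof -
  have "(\<lambda>s. Gamma (b + s) * rGamma (c + s) * exp (- s * of_real (ln t))) holomorphic_on tail_base"
    using b_plus_tail_base_notin_Ints nonpos_Ints_subset_Ints by (intro holomorphic_intros) auto
  then have "compact ((\<lambda>s. Gamma (b + s) * rGamma (c + s) * exp (- s * of_real (ln t))) ` tail_base)"
    using compact_tail_base by (intro compact_continuous_image holomorphic_on_imp_continuous_on)
  then show ?thesis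
    using that unfolding bounded_pos[symmetric] by (auto dest!: compact_imp_bounded simp: bounded_pos)
qed

text \<open>On the shifted tail base the Gamma ratio grows at most polynomially in N and poch_prod
  polynomially as well, while t^(-s) contributes the factor t^N.\<close>

lemma kernel_tail_bound:
  obtains \<beta> where "\<beta> \<longlonglongrightarrow> 0" "\<And>N. 0 \<le> \<beta> N"
    "\<And>N s. s \<in> tail_base \<Longrightarrow> norm (kernel (s - of_nat N)) \<le> \<beta> N"
proof -
  define L where "L = nat \<lceil>norm (c - b)\<rceil>"
  define G where "G s = Gamma (b + s) * rGamma (c + s) * exp (- s * of_real (ln t))" for s
  obtain C where C: "C > 0" "\<And>s. s \<in> tail_base \<Longrightarrow> norm (G s) \<le> C"
    using Gamma_factor_bounded_on_tail_base unfolding G_def by blast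
  obtain B where B: "B > 0" "\<And>s. s \<in> tail_base \<Longrightarrow> norm s \<le> B"
    using compact_imp_bounded[OF compact_tail_base] unfolding bounded_pos by auto
  define A where "A = (\<Sum>i<r. norm (f i)) + B + real msum"
  have A: "A \<ge> 0"
    unfolding A_def using B(1) by (simp add: sum_nonneg)
  define \<beta> where "\<beta> N = C * ((real N + 1) ^ L * ((A + real N) ^ msum * t ^ N))" for N
  show ?thesis
  proof
    have "(\<lambda>N. C * ((real N + 1) ^ L * ((A + real N) ^ q * t ^ N))) \<longlonglongrightarrow> 0" for q
      using t_pos t_less_1 by real_asymp
    then show "\<beta> \<longlonglongrightarrow> 0"
      unfolding \<beta>_def .
    show "0 \<le> \<beta> N" for N
      unfolding \<beta>_def using C A t_pos by simp
  next
    fix N s assume s: "s \<in> tail_base"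
    have ratio: "norm (pochhammer (c + s - of_nat N) N / pochhammer (b + s - of_nat N) N) \<le> (real N + 1) ^ L"
      using norm_pochhammer_ratio_le[OF tail_base_Re_le[OF s], of "c - b" L]
      by (simp add: L_def real_nat_ceiling_ge algebra_simps)
    have "norm (s - of_nat N) \<le> B + real N"
      using norm_triangle_ineq4[of s "of_nat N"] B(2)[OF s] by simp
    then have "((\<Sum>i<r. norm (f i)) + norm (s - of_nat N) + real msum) ^ msum \<le> (A + real N) ^ msum"
      unfolding A_def by (intro power_mono add_nonneg_nonneg sum_nonneg norm_ge_zero of_nat_0_le_iff) auto
    with norm_poch_prod_le have "norm (poch_prod (s - of_nat N)) \<le> (A + real N) ^ msum"
      by (rule order.trans)
    then have "norm (G s) * norm (pochhammer (c + s - of_nat N) N / pochhammer (b + s - of_nat N) N)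
          * norm (poch_prod (s - of_nat N)) * t ^ N \<le> C * (real N + 1) ^ L * (A + real N) ^ msum * t ^ N"
      using C(1) C(2)[OF s] A ratio t_pos by (intro mult_mono mult_nonneg_nonneg) auto
    then show "norm (kernel (s - of_nat N)) \<le> \<beta> N"
      unfolding kernel_minus_of_nat \<beta>_def G_def[symmetric] norm_mult
      using t_pos by (simp add: norm_power algebra_simps)
  qed
qed

lemma norm_contour_integral_tail_segment_le:
  assumes bound: "\<And>s. s \<in> tail_base \<Longrightarrow> norm (kernel (s - of_nat N)) \<le> \<beta>" "0 \<le> \<beta>"
    and seg: "\<And>x. x \<in> closed_segment p q \<Longrightarrow> x + of_nat N \<in> tail_base"
  shows "kernel contour_integrable_on linepath p q"
    and "norm (contour_integral (linepath p q) kernel) \<le> \<beta> * norm (q - p)"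
proof -
  show integrable: "kernel contour_integrable_on linepath p q"
    by (intro kernel_integrable_on_linepath) (rule b_plus_notin_nonpos_Ints_if_shift_in_tail_base[OF seg])
  show "norm (contour_integral (linepath p q) kernel) \<le> \<beta> * norm (q - p)"
    using bound(1)[OF seg] by (intro contour_integral_bound_linepath[OF integrable bound(2)]) simp
qed

lemma cut_in_tail_base:
  "x \<in> closed_segment (Complex (- cut_abscissa N) H) (Complex (- cut_abscissa N) (- H)) \<Longrightarrow> x + of_nat N \<in> tail_base"
  using H_pos by (auto simp: tail_base_def cut_abscissa_def closed_segment_same_Re closed_segment_eq_real_ivl)

lemma horizontal_piece_in_tail_base:
  assumes "cut_abscissa N \<le> R" "R < cut_abscissa N + 1" "\<bar>y\<bar> = H"
    and "x \<in> closed_segment (Complex (- R) y) (Complex (- cut_abscissa N) y)"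
  shows "x + of_nat N \<in> tail_base"
  using assms by (auto simp: tail_base_def cut_abscissa_def closed_segment_same_Im closed_segment_eq_real_ivl)

definition Dcoeff :: "nat \<Rightarrow> complex" where
  "Dcoeff k = (\<Sum>j=k..msum. meijer_alpha r f m b j * of_nat (Stirling j k))"

definition closed_form :: complex where
  "closed_form = (complex_of_real t) powr b * (complex_of_real (1 - t)) powr (c - b - 1) * rGamma (c - b)
     * (\<Sum>k\<le>msum. Dcoeff k * pochhammer (c - b - of_nat k) k
          * (complex_of_real t) ^ k / (complex_of_real (t - 1)) ^ k)"

lemma poch_prod_eq_sum_ffact: "poch_prod (- b - of_nat n) = (\<Sum>k\<le>msum. Dcoeff k * ffact k (of_nat n))"
proof -
  have "poch_prod (- b - of_nat n) = poly (meijer_alpha_poly r f m b) (of_nat n)"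
    by (simp add: poch_prod_def poly_meijer_alpha_poly algebra_simps)
  then show ?thesis
    unfolding poly_eq_sum_Stirling_ffact[OF degree_meijer_alpha_poly]
    by (simp add: Dcoeff_def msum_def meijer_alpha_eq_coeff)
qed

lemma kernel_residue_eq:
  "kernel_residue n = (complex_of_real t) powr b * rGamma (c - b)
     * (pochhammer (1 + b - c) n / fact n * of_real t ^ n * poch_prod (- b - of_nat n))"
proof -
  have "pochhammer (c - b - of_nat n) n = (-1) ^ n * pochhammer (1 + b - c) n"
    using pochhammer_minus'[of "c - b - 1" n] by (simp add: algebra_simps)
  moreover have "rGamma (c - b - of_nat n) = pochhammer (c - b - of_nat n) n * rGamma (c - b)"
    using pochhammer_rGamma[of "c - b - of_nat n" n] by simp
  moreover have "exp ((b + of_nat n) * of_real (ln t)) = exp (b * of_real (ln t)) * exp (of_real (ln t)) ^ n"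
    by (simp add: distrib_right exp_add exp_of_nat_mult)
  moreover have "exp (b * of_real (ln t)) = (complex_of_real t) powr b"
    using t_pos by (simp add: powr_def Ln_of_real)
  moreover have "exp (of_real (ln t) :: complex) = of_real t"
    using t_pos by (simp add: exp_of_real)
  ultimately show ?thesis
    unfolding kernel_residue_def by (simp add: algebra_simps flip: power_mult_distrib)
qed

lemma kernel_residue_sums: "kernel_residue sums closed_form"
proof -
  define a where "a = 1 + b - c"
  define u where "u k n = pochhammer a n / fact n * ffact k (of_nat n) * (of_real t :: complex) ^ n" for k n
  have "(\<lambda>n. (complex_of_real t) powr b * rGamma (c - b) * (\<Sum>k\<le>msum. Dcoeff k * u k n))
      sums ((complex_of_real t) powr b * rGamma (c - b)
            * (\<Sum>k\<le>msum. Dcoeff k * (pochhammer a k * of_real t ^ k * (1 - of_real t) powr (- (a + of_nat k)))))"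
    unfolding u_def using t_pos t_less_1
    by (intro sums_mult sums_sum pochhammer_ffact_series_sums) simp
  also have "\<dots> = closed_form"
  proof -
    have a: "- a = c - b - 1" "1 - a - of_nat k = c - b - of_nat k" for k
      by (simp_all add: a_def)
    show ?thesis
      unfolding closed_form_def pochhammer_mult_powr_eq[OF t_less_1] sum_distrib_left a
      by (simp add: mult_ac)
  qed
  finally show ?thesis
    unfolding kernel_residue_eq poch_prod_eq_sum_ffact u_def
    by (simp add: a_def sum_distrib_left mult_ac)
qed

lemma contour_integral_meijer_loop:
  "contour_integral (meijer_loop X H R) kernel =
     contour_integral (linepath (Complex (- R) (- H)) (Complex X (- H))) kernel
   + contour_integral (linepath (Complex X (- H)) (Complex X H)) kernel
   + contour_integral (linepath (Complex X H) (Complex (- R) H)) kernel"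
  unfolding meijer_loop_def
  by (simp add: kernel_integrable_on_horizontal kernel_integrable_on_vertical_X
      valid_path_join contour_integrable_joinI)

lemma contour_integral_meijer_loop_split:
  assumes "R' \<le> R" "- R' \<le> X"
  shows "contour_integral (meijer_loop X H R) kernel = contour_integral (meijer_loop X H R') kernel
      + (contour_integral (linepath (Complex (- R) (- H)) (Complex (- R') (- H))) kernel
      + contour_integral (linepath (Complex (- R') H) (Complex (- R) H)) kernel)"
proof -
  have "Complex (- R') (- H) \<in> closed_segment (Complex (- R) (- H)) (Complex X (- H))"
       "Complex (- R') H \<in> closed_segment (Complex X H) (Complex (- R) H)"
    using assms by (simp_all add: closed_segment_same_Im closed_segment_eq_real_ivl)
  then show ?thesis
    unfolding contour_integral_meijer_loop
    using contour_integral_split_linepath[OF kernel_continuous_on_horizontal]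
    by (simp add: algebra_simps)
qed

lemma contour_integral_rectpath_eq_meijer_loop:
  assumes "kernel contour_integrable_on linepath (Complex (- R) H) (Complex (- R) (- H))"
  shows "contour_integral (rectpath (Complex (- R) (- H)) (Complex X H)) kernel
       = contour_integral (meijer_loop X H R) kernel
         + contour_integral (linepath (Complex (- R) H) (Complex (- R) (- H))) kernel"
  unfolding rectpath_def Let_def contour_integral_meijer_loop
  by (simp add: kernel_integrable_on_horizontal kernel_integrable_on_vertical_X assms
      valid_path_join contour_integrable_joinI)

lemma cut_integral_bound:
  assumes "\<And>s. s \<in> tail_base \<Longrightarrow> norm (kernel (s - of_nat N)) \<le> \<beta>" "0 \<le> \<beta>"
  shows "kernel contour_integrable_on linepath (Complex (- cut_abscissa N) H) (Complex (- cut_abscissa N) (- H))"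
    and "norm (contour_integral (linepath (Complex (- cut_abscissa N) H) (Complex (- cut_abscissa N) (- H))) kernel)
           \<le> \<beta> * (2 * H)"
proof -
  note bound = norm_contour_integral_tail_segment_le[OF assms cut_in_tail_base]
  show "kernel contour_integrable_on linepath (Complex (- cut_abscissa N) H) (Complex (- cut_abscissa N) (- H))"
    by (rule bound(1))
  have "norm (Complex (- cut_abscissa N) (- H) - Complex (- cut_abscissa N) H) \<le> 2 * H"
    using cmod_le[of "Complex (- cut_abscissa N) (- H) - Complex (- cut_abscissa N) H"] H_pos by simp
  then show "norm (contour_integral (linepath (Complex (- cut_abscissa N) H) (Complex (- cut_abscissa N) (- H))) kernel)
      \<le> \<beta> * (2 * H)"
    using bound(2) assms(2) by (meson mult_left_mono order.trans)
qed

lemma horizontal_piece_integral_bound: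
  assumes "\<And>s. s \<in> tail_base \<Longrightarrow> norm (kernel (s - of_nat N)) \<le> \<beta>" "0 \<le> \<beta>"
    and R: "cut_abscissa N \<le> R" "R < cut_abscissa N + 1" and y: "\<bar>y\<bar> = H"
  shows "norm (contour_integral (linepath (Complex (- R) y) (Complex (- cut_abscissa N) y)) kernel) \<le> \<beta>"
    and "norm (contour_integral (linepath (Complex (- cut_abscissa N) y) (Complex (- R) y)) kernel) \<le> \<beta>"
proof -
  have "norm (Complex (- cut_abscissa N) y - Complex (- R) y) \<le> 1"
    using cmod_le[of "Complex (- cut_abscissa N) y - Complex (- R) y"] R by simp
  moreover have "norm (contour_integral (linepath (Complex (- R) y) (Complex (- cut_abscissa N) y)) kernel)
      \<le> \<beta> * norm (Complex (- cut_abscissa N) y - Complex (- R) y)"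
    by (rule norm_contour_integral_tail_segment_le(2)[OF assms(1,2) horizontal_piece_in_tail_base[OF R y]])
  ultimately show "norm (contour_integral (linepath (Complex (- R) y) (Complex (- cut_abscissa N) y)) kernel) \<le> \<beta>"
    using assms(2) by (meson mult_left_le order.trans)
  then show "norm (contour_integral (linepath (Complex (- cut_abscissa N) y) (Complex (- R) y)) kernel) \<le> \<beta>"
    using contour_integral_reverse_linepath[OF kernel_continuous_on_horizontal[OF y],
        of "- cut_abscissa N" "- R"] by simp
qed

definition last_cut :: "real \<Rightarrow> nat" where
  "last_cut R = nat \<lfloor>R - Re b - 1/2\<rfloor>"

lemma last_cut_tendsto: "filterlim last_cut at_top at_top"
  unfolding filterlim_at_top eventually_at_top_linorder
proof
  fix Z :: nat
  show "\<exists>R0. \<forall>R\<ge>R0. Z \<le> last_cut R"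
    by (rule exI[of _ "real Z + Re b + 1/2"]) (auto simp: last_cut_def intro!: le_nat_floor)
qed

lemma cut_last_cut:
  assumes "Re b + 1/2 \<le> R"
  shows "cut_abscissa (last_cut R) \<le> R" "R < cut_abscissa (last_cut R) + 1"
proof -
  have "real (last_cut R) = of_int \<lfloor>R - Re b - 1/2\<rfloor>"
    using assms by (simp add: last_cut_def)
  then show "cut_abscissa (last_cut R) \<le> R" "R < cut_abscissa (last_cut R) + 1"
    unfolding cut_abscissa_def by linarith+
qed

definition cut_integral :: "nat \<Rightarrow> complex" where
  "cut_integral N =
     contour_integral (linepath (Complex (- cut_abscissa N) H) (Complex (- cut_abscissa N) (- H))) kernel"

definition pieces_integral :: "real \<Rightarrow> complex" where
  "pieces_integral R =
     contour_integral (linepath (Complex (- R) (- H)) (Complex (- cut_abscissa (last_cut R)) (- H))) kernel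
   + contour_integral (linepath (Complex (- cut_abscissa (last_cut R)) H) (Complex (- R) H)) kernel"

lemma cut_integral_tendsto_0: "cut_integral \<longlonglongrightarrow> 0"
proof -
  obtain \<beta> where \<beta>: "\<beta> \<longlonglongrightarrow> 0" "\<And>N. 0 \<le> \<beta> N"
    "\<And>N s. s \<in> tail_base \<Longrightarrow> norm (kernel (s - of_nat N)) \<le> \<beta> N"
    using kernel_tail_bound by blast
  show ?thesis
  proof (rule Lim_null_comparison)
    show "\<forall>\<^sub>F N in sequentially. norm (cut_integral N) \<le> \<beta> N * (2 * H)"
      unfolding cut_integral_def using cut_integral_bound(2)[OF \<beta>(3,2)] by (intro always_eventually allI)
    show "(\<lambda>N. \<beta> N * (2 * H)) \<longlonglongrightarrow> 0"
      by (rule tendsto_mult_left_zero[OF \<beta>(1)])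
  qed
qed

lemma pieces_integral_tendsto_0: "(pieces_integral \<longlongrightarrow> 0) at_top"
proof -
  obtain \<beta> where \<beta>: "\<beta> \<longlonglongrightarrow> 0" "\<And>N. 0 \<le> \<beta> N"
    "\<And>N s. s \<in> tail_base \<Longrightarrow> norm (kernel (s - of_nat N)) \<le> \<beta> N"
    using kernel_tail_bound by blast
  have "\<forall>\<^sub>F R in at_top. norm (pieces_integral R) \<le> 2 * \<beta> (last_cut R)"
    unfolding eventually_at_top_linorder
  proof (intro exI allI impI)
    fix R assume R: "R \<ge> Re b + 1/2"
    have "norm (pieces_integral R)
        \<le> norm (contour_integral (linepath (Complex (- R) (- H)) (Complex (- cut_abscissa (last_cut R)) (- H))) kernel)
          + norm (contour_integral (linepath (Complex (- cut_abscissa (last_cut R)) H) (Complex (- R) H)) kernel)"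
      unfolding pieces_integral_def by (rule norm_triangle_ineq)
    also have "\<dots> \<le> \<beta> (last_cut R) + \<beta> (last_cut R)"
      using horizontal_piece_integral_bound(1)[OF \<beta>(3,2) cut_last_cut[OF R], of "- H"]
            horizontal_piece_integral_bound(2)[OF \<beta>(3,2) cut_last_cut[OF R], of H]
      by (intro add_mono) simp_all
    finally show "norm (pieces_integral R) \<le> 2 * \<beta> (last_cut R)"
      by simp
  qed
  moreover have "((\<lambda>R. 2 * \<beta> (last_cut R)) \<longlongrightarrow> 0) at_top"
    using tendsto_mult_right_zero[OF filterlim_compose[OF \<beta>(1) last_cut_tendsto], of 2] by simp
  ultimately show ?thesis
    by (rule Lim_null_comparison)
qed

text \<open>Cutting the loop at the last cut to the right of -R leaves a rectangle, which carries the
  residues, minus the cut, plus two short horizontal pieces.\<close>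

lemma contour_integral_meijer_loop_decompose:
  assumes R: "Re b + 1/2 \<le> R"
  shows "contour_integral (meijer_loop X H R) kernel
       = 2 * pi * \<i> * (\<Sum>n\<le>last_cut R. kernel_residue n) - cut_integral (last_cut R) + pieces_integral R"
proof -
  obtain \<beta> where \<beta>: "\<beta> \<longlonglongrightarrow> 0" "\<And>N. 0 \<le> \<beta> N"
    "\<And>N s. s \<in> tail_base \<Longrightarrow> norm (kernel (s - of_nat N)) \<le> \<beta> N"
    using kernel_tail_bound by blast
  define N where "N = last_cut R"
  have "contour_integral (meijer_loop X H R) kernel
      = contour_integral (meijer_loop X H (cut_abscissa N)) kernel + pieces_integral R"
    using cut_last_cut(1)[OF R] abs_Re_less_X(1) unfolding pieces_integral_def N_def
    by (intro contour_integral_meijer_loop_split) (auto simp: cut_abscissa_def)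
  moreover have "contour_integral (meijer_loop X H (cut_abscissa N)) kernel
      = 2 * pi * \<i> * (\<Sum>n\<le>N. kernel_residue n) - cut_integral N"
    using contour_integral_rectpath_eq_meijer_loop[OF cut_integral_bound(1)[OF \<beta>(3,2)], of N]
          contour_integral_rectpath_kernel[of N]
    by (simp add: cut_integral_def)
  ultimately show ?thesis
    by (simp add: N_def)
qed

lemma meijer_loop_integral_tendsto:
  "((\<lambda>R. contour_integral (meijer_loop X H R) kernel / (2 * of_real pi * \<i>)) \<longlongrightarrow> closed_form) at_top"
proof -
  define c2 where "c2 = 2 * complex_of_real pi * \<i>"
  have c2: "c2 \<noteq> 0" by (simp add: c2_def)
  have "(\<lambda>N. \<Sum>n<Suc N. kernel_residue n) \<longlonglongrightarrow> closed_form"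
    using kernel_residue_sums unfolding sums_def by (rule LIMSEQ_Suc)
  then have "(\<lambda>N. (\<Sum>n\<le>N. kernel_residue n) - cut_integral N / c2) \<longlonglongrightarrow> closed_form - 0 / c2"
    unfolding lessThan_Suc_atMost by (intro tendsto_diff tendsto_divide tendsto_const c2 cut_integral_tendsto_0)
  from filterlim_compose[OF this last_cut_tendsto]
  have "((\<lambda>R. (\<Sum>n\<le>last_cut R. kernel_residue n) - cut_integral (last_cut R) / c2) \<longlongrightarrow> closed_form) at_top"
    by (simp only: o_def div_0 diff_zero)
  from tendsto_add[OF this tendsto_divide[OF pieces_integral_tendsto_0 tendsto_const c2]]
  have "((\<lambda>R. (\<Sum>n\<le>last_cut R. kernel_residue n) - cut_integral (last_cut R) / c2 + pieces_integral R / c2)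
      \<longlongrightarrow> closed_form) at_top"
    by simp
  moreover have "\<forall>\<^sub>F R in at_top. contour_integral (meijer_loop X H R) kernel / c2
      = (\<Sum>n\<le>last_cut R. kernel_residue n) - cut_integral (last_cut R) / c2 + pieces_integral R / c2"
    unfolding eventually_at_top_linorder using contour_integral_meijer_loop_decompose c2
    by (intro exI[of _ "Re b + 1/2"] allI impI) (simp add: c2_def add_divide_distrib diff_divide_distrib)
  ultimately show ?thesis
    unfolding c2_def using tendsto_cong by force
qed

end

theorem lemma1:
  fixes r :: nat and m :: "nat \<Rightarrow> nat" and f :: "nat \<Rightarrow> complex"
    and b c :: complex and t :: real
  assumes "r \<ge> 1" and "0 < t" and "t < 1"
  defines "M \<equiv> (\<Sum>i<r. m i)"
  defines "D \<equiv> (\<lambda>k. \<Sum>j=k..M. meijer_alpha r f m b j * of_nat (Stirling j k))"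
  shows "meijerG r t c f b m =
           (complex_of_real t) powr b * (complex_of_real (1 - t)) powr (c - b - 1) * rGamma (c - b)
           * (\<Sum>k\<le>M. D k * pochhammer (c - b - of_nat k) k
                 * (complex_of_real t) ^ k / (complex_of_real (t - 1)) ^ k)
         \<and> (\<forall>k\<le>M. (\<forall>n\<le>k. \<forall>i<r. pochhammer (1 - f i + b - of_nat (m i)) n \<noteq> 0) \<longrightarrow>
           D k = (-1) ^ k * (\<Prod>i<r. pochhammer (f i - b) (m i)) / fact k * hyp_F r f m b k)"
proof -
  \<comment> \<open>The argument works verbatim for r = 0, where P = 1.\<close>
  interpret meijer_setting r m f b c t
    using assms(2,3) by unfold_locales
  have "meijerG r t c f b m = closed_form"
    unfolding meijerG_def contour_integral_meijer_loop_eq_kernel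
    using meijer_loop_integral_tendsto by (rule tendsto_Lim[rotated]) simp
  then show ?thesis
    unfolding D_def M_def using sum_Stirling_meijer_alpha_eq_hyp_F
    by (simp add: closed_form_def Dcoeff_def msum_def)
qed

end
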